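(* Let $k$ be a positive integer with $k\equiv0\pmod4$. Then $\Bbbk_{-1}[u,v]^{G_{1,k}}\cong\Bbbk[u,v]^{\frac1{2k}(1,k+1)}$; in particular it is a commutative cyclic quotient singularity.
   Context: $\Bbbk$ is algebraically closed of characteristic $0$; $\Bbbk_{-1}[u,v]=\Bbbk\langle u,v\rangle/(vu+uv)$; matrices $\begin{pmatrix}a&b\\c&d\end{pmatrix}$ act by $u\mapsto au+cv$, $v\mapsto bu+dv$. $G_{n,k}$ is generated by $\mathrm{diag}(\omega^{2k},\omega^{-2k})$ and $\begin{pmatrix}0&\omega^n\\\omega^n&0\end{pmatrix}$ for $\omega$ a primitive $(2nk)$th root of unity (so $G_{1,k}$ is cyclic, generated by the antidiagonal matrix with entries a primitive $2k$th root of unity). $\frac1m(1,b)$ is the cyclic group generated by $\mathrm{diag}(\omega_m,\omega_m^b)$ acting on the commutative polynomial ring $\Bbbk[u,v]$. *)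

theory Defs
  imports "HOL-Library.Poly_Mapping" "HOL-Computational_Algebra.Polynomial"
begin

text \<open>Polynomials in two variables u, v over a field: the element u^i v^j is the
  basis vector indexed by (i,j) (ordered monomials).  Elements are finitely
  supported coefficient functions.\<close>

type_synonym 'k bipoly = "(nat \<times> nat) \<Rightarrow>\<^sub>0 'k"

definition algebraically_closed :: "'k::field itself \<Rightarrow> bool" where
  "algebraically_closed _ \<longleftrightarrow> (\<forall>p::'k poly. degree p > 0 \<longrightarrow> (\<exists>x. poly p x = 0))"

definition bscal :: "'k::field \<Rightarrow> 'k bipoly \<Rightarrow> 'k bipoly" where
  "bscal c p = Poly_Mapping.map (\<lambda>x. c * x) p"

definition bone :: "'k::field bipoly" where "bone = Poly_Mapping.single (0,0) 1"
definition var_u :: "'k::field bipoly" where "var_u = Poly_Mapping.single (1,0) 1"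
definition var_v :: "'k::field bipoly" where "var_v = Poly_Mapping.single (0,1) 1"

text \<open>Multiplication in the skew polynomial ring k_{-1}[u,v] = k<u,v>/(vu+uv):
  (u^i v^j)(u^a v^b) = (-1)^(j a) u^(i+a) v^(j+b).\<close>
definition skew_mult :: "'k::field bipoly \<Rightarrow> 'k bipoly \<Rightarrow> 'k bipoly" where
  "skew_mult p q = (\<Sum>(i,j)\<in>Poly_Mapping.keys p. \<Sum>(a,b)\<in>Poly_Mapping.keys q.
      Poly_Mapping.single (i+a, j+b) ((-1)^(j*a) * Poly_Mapping.lookup p (i,j) * Poly_Mapping.lookup q (a,b)))"

definition comm_mult :: "'k::field bipoly \<Rightarrow> 'k bipoly \<Rightarrow> 'k bipoly" where
  "comm_mult p q = (\<Sum>(i,j)\<in>Poly_Mapping.keys p. \<Sum>(a,b)\<in>Poly_Mapping.keys q.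
      Poly_Mapping.single (i+a, j+b) (Poly_Mapping.lookup p (i,j) * Poly_Mapping.lookup q (a,b)))"

definition mpower :: "('k bipoly \<Rightarrow> 'k bipoly \<Rightarrow> 'k bipoly) \<Rightarrow> 'k::field bipoly \<Rightarrow> nat \<Rightarrow> 'k bipoly" where
  "mpower M x n = ((M x) ^^ n) bone"

text \<open>2x2 matrices (a,b,c,d) = [[a,b],[c,d]].\<close>
type_synonym 'k mat2 = "'k \<times> 'k \<times> 'k \<times> 'k"

definition mat2_mult :: "'k::field mat2 \<Rightarrow> 'k mat2 \<Rightarrow> 'k mat2" where
  "mat2_mult X Y = (case X of (a,b,c,d) \<Rightarrow> case Y of (e,f,g,h) \<Rightarrow>
      (a*e + b*g, a*f + b*h, c*e + d*g, c*f + d*h))"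

definition mat2_pow :: "'k::field mat2 \<Rightarrow> nat \<Rightarrow> 'k mat2" where
  "mat2_pow X n = ((mat2_mult X) ^^ n) (1,0,0,1)"

definition mat_act :: "('k bipoly \<Rightarrow> 'k bipoly \<Rightarrow> 'k bipoly) \<Rightarrow> 'k::field mat2 \<Rightarrow> 'k bipoly \<Rightarrow> 'k bipoly" where
  "mat_act M X f = (case X of (a,b,c,d) \<Rightarrow>
     (let U = bscal a var_u + bscal c var_v; V = bscal b var_u + bscal d var_v in
      \<Sum>(i,j)\<in>Poly_Mapping.keys f. bscal (Poly_Mapping.lookup f (i,j)) (M (mpower M U i) (mpower M V j))))"

definition cyc_invariants :: "('k bipoly \<Rightarrow> 'k bipoly \<Rightarrow> 'k bipoly) \<Rightarrow> 'k::field mat2 \<Rightarrow> 'k bipoly set" where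
  "cyc_invariants M X = {f. \<forall>n. mat_act M (mat2_pow X n) f = f}"

definition primitive_root :: "'k::field \<Rightarrow> nat \<Rightarrow> bool" where
  "primitive_root w m \<longleftrightarrow> w ^ m = 1 \<and> (\<forall>j. 0 < j \<and> j < m \<longrightarrow> w ^ j \<noteq> 1)"

text \<open>G_{1,k}: cyclic group generated by the antidiagonal matrix with entries w,
  w a primitive 2k-th root of unity (the diagonal generator diag(w^{2k},w^{-2k}) is trivial).\<close>
definition G1_gen :: "'k::field \<Rightarrow> 'k mat2" where
  "G1_gen w = (0, w, w, 0)"

text \<open>Generator of 1/m(1,b): diag(w, w^b).\<close>
definition cyc_diag_gen :: "'k::field \<Rightarrow> nat \<Rightarrow> 'k mat2" where
  "cyc_diag_gen w b = (w, 0, 0, w ^ b)"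

definition subalg_iso :: "('k bipoly \<Rightarrow> 'k bipoly \<Rightarrow> 'k bipoly) \<Rightarrow> 'k bipoly set \<Rightarrow>
    ('k bipoly \<Rightarrow> 'k bipoly \<Rightarrow> 'k bipoly) \<Rightarrow> 'k::field bipoly set \<Rightarrow> bool" where
  "subalg_iso M1 A M2 B \<longleftrightarrow> (\<exists>\<phi>. bij_betw \<phi> A B \<and> \<phi> bone = bone \<and>
     (\<forall>x\<in>A. \<forall>y\<in>A. \<phi> (x + y) = \<phi> x + \<phi> y \<and> \<phi> (M1 x y) = M2 (\<phi> x) (\<phi> y)) \<and>
     (\<forall>c. \<forall>x\<in>A. \<phi> (bscal c x) = bscal c (\<phi> x)))"

end

theory Submission
  imports Defs "HOL-Library.Product_Plus"
begin

text \<open>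
  An element \<open>f = \<Sum> f\<^sub>a\<^sub>b u\<^sup>a v\<^sup>b\<close> of \<open>\<Bbbk>\<^sub>-\<^sub>1[u,v]\<close> is \<open>G\<^sub>1\<^sub>,\<^sub>k\<close>-invariant iff
  \<open>f\<^sub>a\<^sub>b = (-1)\<^bsup>ab\<^esup> \<xi>\<^bsup>a+b\<^esup> f\<^sub>b\<^sub>a\<close>; applying this twice gives \<open>\<xi>\<^bsup>2(a+b)\<^esup> = 1\<close> on the support,
  so \<open>4 | a + b\<close> there when \<open>4 | k\<close>. On polynomials supported in even degrees, rescaling
  \<open>f\<^sub>a\<^sub>b\<close> by \<open>(-1)\<^bsup>b(b-1)/2\<^esup>\<close> (the twist) turns the skew product into the commutative one,
  and it turns the invariance condition into \<open>f\<^sub>a\<^sub>b = \<xi>\<^bsup>a+b\<^esup> f\<^sub>b\<^sub>a\<close>, i.e. invariance in \<open>\<Bbbk>[u,v]\<close>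
  under \<open>u \<mapsto> \<xi> v, v \<mapsto> \<xi> u\<close>. The change of variables \<open>u \<mapsto> u + v, v \<mapsto> u - v\<close>
  conjugates this swap to \<open>diag(\<xi>, -\<xi>) = diag(\<xi>, \<xi>\<^bsup>k+1\<^esup>)\<close>, whose invariant ring is
  \<open>\<Bbbk>[u,v]\<^bsup>1/2k(1,k+1)\<^esup>\<close>. Since the twist is injective and multiplicative on the invariants,
  they also commute.
\<close>

section \<open>Substitution in the commutative polynomial ring\<close>

abbreviation bconst :: "'k::field \<Rightarrow> 'k bipoly" where
  "bconst c \<equiv> Poly_Mapping.single 0 c"

lemma zero_nat_pair: "((0::nat), (0::nat)) = 0"
  by (simp add: zero_prod_def)

lemma bone_eq_one: "(bone :: 'k::field bipoly) = 1"
  unfolding bone_def zero_nat_pair by simp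

lemma bscal_eq_mult: "bscal c p = bconst c * p"
  unfolding bscal_def by (rule mult_map_scale_conv_mult)

lemma lookup_bconst_mult:
  "Poly_Mapping.lookup (bconst c * p) x = c * Poly_Mapping.lookup p x"
  by (simp add: bscal_eq_mult[symmetric] bscal_def map.rep_eq when_def)

lemma bconst_mult: "bconst (a * b) = bconst a * (bconst b :: 'k::field bipoly)"
  by (simp add: mult_single)

lemma bconst_power: "bconst (a ^ n) = (bconst a :: 'k::field bipoly) ^ n"
  by (induction n) (simp_all add: bconst_mult)

lemma sum_keys_single: "(\<Sum>x\<in>Poly_Mapping.keys f. Poly_Mapping.single x (Poly_Mapping.lookup f x)) = f"
  by (rule poly_mapping_eqI) (simp add: lookup_sum lookup_single when_def in_keys_iff)

lemma times_bipoly_expand: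
  "(p :: 'k::field bipoly) * q = (\<Sum>x\<in>Poly_Mapping.keys p. \<Sum>y\<in>Poly_Mapping.keys q.
     Poly_Mapping.single (x + y) (Poly_Mapping.lookup p x * Poly_Mapping.lookup q y))"
proof -
  have "p * q = (\<Sum>x\<in>Poly_Mapping.keys p. Poly_Mapping.single x (Poly_Mapping.lookup p x)) *
     (\<Sum>y\<in>Poly_Mapping.keys q. Poly_Mapping.single y (Poly_Mapping.lookup q y))"
    by (simp only: sum_keys_single)
  then show ?thesis by (simp add: sum_product mult_single)
qed

lemma comm_mult_eq_times: "comm_mult p q = (p * q :: 'k::field bipoly)"
  unfolding comm_mult_def times_bipoly_expand by (simp add: split_def plus_prod_def)

lemma mpower_comm_mult: "mpower comm_mult x n = (x ^ n :: 'k::field bipoly)"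
  unfolding mpower_def by (induction n) (simp_all add: bone_eq_one comm_mult_eq_times)

lemma var_u_power: "var_u ^ i = Poly_Mapping.single (i, 0) (1::'k::field)"
  by (induction i) (simp_all add: var_u_def mult_single zero_nat_pair)

lemma var_v_power: "var_v ^ j = Poly_Mapping.single (0, j) (1::'k::field)"
  by (induction j) (simp_all add: var_v_def mult_single zero_nat_pair)

lemma monomial_eq_single: "bconst c * var_u ^ i * var_v ^ j = Poly_Mapping.single (i, j) (c::'k::field)"
  by (simp add: var_u_power var_v_power mult_single zero_nat_pair)

lemma lookup_sum_keys_single_inj:
  assumes "inj g"
  shows "Poly_Mapping.lookup (\<Sum>x\<in>Poly_Mapping.keys f. Poly_Mapping.single (g x) (Poly_Mapping.lookup f x * c x)) (g y)
       = Poly_Mapping.lookup f y * (c y :: 'k::field)"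
  using assms by (simp add: lookup_sum lookup_single when_def inj_eq in_keys_iff)


definition bsubst :: "'k::field bipoly \<Rightarrow> 'k bipoly \<Rightarrow> 'k bipoly \<Rightarrow> 'k bipoly" where
  "bsubst U V f = (\<Sum>x\<in>Poly_Mapping.keys f. bconst (Poly_Mapping.lookup f x) * U ^ fst x * V ^ snd x)"

lemma bsubst_superset:
  assumes "finite A" "Poly_Mapping.keys f \<subseteq> A"
  shows "bsubst U V f = (\<Sum>x\<in>A. bconst (Poly_Mapping.lookup f x) * U ^ fst x * V ^ snd x)"
  unfolding bsubst_def
  by (rule sum.mono_neutral_left) (use assms in \<open>auto simp: in_keys_iff\<close>)

lemma bsubst_add: "bsubst U V (f + g) = bsubst U V f + bsubst U V g"
proof -
  let ?A = "Poly_Mapping.keys f \<union> Poly_Mapping.keys g"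
  have "bsubst U V (f + g) = (\<Sum>x\<in>?A. bconst (Poly_Mapping.lookup (f + g) x) * U ^ fst x * V ^ snd x)"
    by (rule bsubst_superset) (auto simp: keys_add)
  also have "\<dots> = (\<Sum>x\<in>?A. bconst (Poly_Mapping.lookup f x) * U ^ fst x * V ^ snd x)
      + (\<Sum>x\<in>?A. bconst (Poly_Mapping.lookup g x) * U ^ fst x * V ^ snd x)"
    by (simp add: lookup_add single_add distrib_right sum.distrib)
  also have "\<dots> = bsubst U V f + bsubst U V g"
    by (simp add: bsubst_superset[symmetric])
  finally show ?thesis .
qed

lemma bsubst_zero: "bsubst U V 0 = 0"
  by (simp add: bsubst_def)

lemma bsubst_uminus: "bsubst U V (- f) = - bsubst U V f"
  using bsubst_add[of U V "- f" f] by (simp add: bsubst_zero eq_neg_iff_add_eq_0)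

lemma bsubst_diff: "bsubst U V (f - g) = bsubst U V f - bsubst U V g"
  by (simp only: diff_conv_add_uminus bsubst_add bsubst_uminus)

lemma bsubst_sum: "bsubst U V (\<Sum>i\<in>I. F i) = (\<Sum>i\<in>I. bsubst U V (F i))"
  by (induction I rule: infinite_finite_induct) (simp_all add: bsubst_zero bsubst_add)

lemma bsubst_single: "bsubst U V (Poly_Mapping.single x c) = bconst c * U ^ fst x * V ^ snd x"
  by (simp add: bsubst_def)

lemma bsubst_bconst_mult: "bsubst U V (bconst c * f) = bconst c * bsubst U V f"
proof -
  have "bsubst U V (bconst c * f)
      = (\<Sum>x\<in>Poly_Mapping.keys f. bconst (Poly_Mapping.lookup (bconst c * f) x) * U ^ fst x * V ^ snd x)"
    by (rule bsubst_superset) (auto simp: in_keys_iff lookup_bconst_mult)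
  then show ?thesis
    by (simp add: bsubst_def sum_distrib_left lookup_bconst_mult bconst_mult mult.assoc)
qed

lemma bsubst_mult: "bsubst U V (f * g) = bsubst U V f * bsubst U V g"
proof -
  have "bsubst U V (f * g) = (\<Sum>x\<in>Poly_Mapping.keys f. \<Sum>y\<in>Poly_Mapping.keys g.
      bconst (Poly_Mapping.lookup f x) * U ^ fst x * V ^ snd x *
      (bconst (Poly_Mapping.lookup g y) * U ^ fst y * V ^ snd y))"
    by (subst times_bipoly_expand)
      (simp add: bsubst_sum bsubst_single bconst_mult power_add algebra_simps)
  then show ?thesis
    by (simp add: bsubst_def sum_product)
qed

lemma bsubst_one: "bsubst U V 1 = 1"
  using bsubst_single[of U V 0 1] by simp

lemma bsubst_power: "bsubst U V (f ^ n) = bsubst U V f ^ n"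
  by (induction n) (simp_all add: bsubst_one bsubst_mult)

lemma bsubst_var_u: "bsubst U V var_u = U"
  by (simp add: var_u_def bsubst_single)

lemma bsubst_var_v: "bsubst U V var_v = V"
  by (simp add: var_v_def bsubst_single)

lemma bsubst_vars: "bsubst var_u var_v f = f"
  unfolding bsubst_def monomial_eq_single prod.collapse by (rule sum_keys_single)

lemma bsubst_bconst: "bsubst U V (bconst c) = bconst c"
  by (simp add: bsubst_single zero_prod_def)

lemma bsubst_bsubst: "bsubst U V (bsubst U' V' f) = bsubst (bsubst U V U') (bsubst U V V') f"
  unfolding bsubst_def[of U' V' f] bsubst_sum bsubst_mult bsubst_power bsubst_bconst
  by (simp add: bsubst_def[of "bsubst U V U'"])

lemma bsubst_inverse:
  assumes "bsubst U V U' = var_u" "bsubst U V V' = var_v"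
  shows "bsubst U V (bsubst U' V' f) = f"
  by (simp add: bsubst_bsubst assms bsubst_vars)

lemma mat_act_comm_mult:
  "mat_act comm_mult (a, b, c, d) f = bsubst (bconst a * var_u + bconst c * var_v) (bconst b * var_u + bconst d * var_v) f"
  unfolding mat_act_def Let_def bscal_eq_mult comm_mult_eq_times mpower_comm_mult bsubst_def
  by (simp add: split_def mult.assoc)

lemma scaled_monomial_eq_single:
  "bconst c * (bconst \<alpha> * var_u) ^ i * (bconst \<beta> * var_v) ^ j
     = Poly_Mapping.single (i, j) (c * (\<alpha> ^ i * \<beta> ^ j) :: 'k::field)"
proof -
  have "bconst c * (bconst \<alpha> * var_u) ^ i * (bconst \<beta> * var_v) ^ j
      = bconst (c * (\<alpha> ^ i * \<beta> ^ j)) * var_u ^ i * var_v ^ j"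
    by (simp add: power_mult_distrib bconst_power bconst_mult algebra_simps)
  then show ?thesis by (simp only: monomial_eq_single)
qed

lemma swapped_monomial_eq_single:
  "bconst c * (bconst \<alpha> * var_v) ^ i * (bconst \<beta> * var_u) ^ j
     = Poly_Mapping.single (j, i) (c * (\<alpha> ^ i * \<beta> ^ j) :: 'k::field)"
proof -
  have "bconst c * (bconst \<alpha> * var_v) ^ i * (bconst \<beta> * var_u) ^ j
      = bconst (c * (\<alpha> ^ i * \<beta> ^ j)) * var_u ^ j * var_v ^ i"
    by (simp add: power_mult_distrib bconst_power bconst_mult algebra_simps)
  then show ?thesis by (simp only: monomial_eq_single)
qed

lemma lookup_bsubst_diagonal:
  "Poly_Mapping.lookup (bsubst (bconst \<alpha> * var_u) (bconst \<beta> * var_v) f) y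
     = Poly_Mapping.lookup f y * (\<alpha> ^ fst y * \<beta> ^ snd y :: 'k::field)"
proof -
  have "bsubst (bconst \<alpha> * var_u) (bconst \<beta> * var_v) f
      = (\<Sum>x\<in>Poly_Mapping.keys f.
          Poly_Mapping.single (id x) (Poly_Mapping.lookup f x * (\<alpha> ^ fst x * \<beta> ^ snd x)))"
    unfolding bsubst_def scaled_monomial_eq_single by simp
  then show ?thesis
    using lookup_sum_keys_single_inj[OF inj_on_id] by simp
qed

lemma lookup_bsubst_antidiagonal:
  "Poly_Mapping.lookup (bsubst (bconst \<alpha> * var_v) (bconst \<beta> * var_u) f) (a, b)
     = Poly_Mapping.lookup f (b, a) * (\<alpha> ^ b * \<beta> ^ a :: 'k::field)"
proof -
  have "bsubst (bconst \<alpha> * var_v) (bconst \<beta> * var_u) f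
      = (\<Sum>x\<in>Poly_Mapping.keys f. Poly_Mapping.single ((\<lambda>(i, j). (j, i)) x)
          (Poly_Mapping.lookup f x * (\<alpha> ^ fst x * \<beta> ^ snd x)))"
    unfolding bsubst_def swapped_monomial_eq_single by (simp add: split_def)
  then show ?thesis
    using lookup_sum_keys_single_inj[OF swap_inj_on, of f _ "(b, a)"] by simp
qed

section \<open>The skew polynomial ring and the invariants of \<open>G\<^sub>1\<^sub>,\<^sub>k\<close>\<close>

lemma skew_mult_single:
  "skew_mult (Poly_Mapping.single (i, j) c) (Poly_Mapping.single (a, b) d)
     = Poly_Mapping.single (i + a, j + b) ((-1) ^ (j * a) * c * (d::'k::field))"
  by (cases "c = 0"; cases "d = 0") (simp_all add: skew_mult_def)

lemma mpower_skew_mult_u: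
  "mpower skew_mult (Poly_Mapping.single (1, 0) c) n = Poly_Mapping.single (n, 0) (c ^ n :: 'k::field)"
  unfolding mpower_def by (induction n) (simp_all add: bone_def skew_mult_single)

lemma mpower_skew_mult_v:
  "mpower skew_mult (Poly_Mapping.single (0, 1) c) n = Poly_Mapping.single (0, n) (c ^ n :: 'k::field)"
  unfolding mpower_def by (induction n) (simp_all add: bone_def skew_mult_single)

lemma bscal_single: "bscal c (Poly_Mapping.single x d) = Poly_Mapping.single x (c * d :: 'k::field)"
  by (simp add: bscal_eq_mult mult_single)

lemma bscal_zero: "bscal 0 p = 0"
  by (simp add: bscal_eq_mult)

lemma lookup_mat_act_skew_diagonal:
  "Poly_Mapping.lookup (mat_act skew_mult (c, 0, 0, c) f) y
     = Poly_Mapping.lookup f y * (c ^ (fst y + snd y) :: 'k::field)"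
proof -
  have "mat_act skew_mult (c, 0, 0, c) f = (\<Sum>x\<in>Poly_Mapping.keys f.
      Poly_Mapping.single (id x) (Poly_Mapping.lookup f x * c ^ (fst x + snd x)))"
    unfolding mat_act_def Let_def bscal_zero var_u_def var_v_def
    by (simp add: split_def bscal_single mpower_skew_mult_u[simplified] mpower_skew_mult_v[simplified]
        skew_mult_single power_add)
  then show ?thesis
    using lookup_sum_keys_single_inj[OF inj_on_id] by simp
qed

lemma lookup_mat_act_skew_antidiagonal:
  "Poly_Mapping.lookup (mat_act skew_mult (0, c, c, 0) f) (a, b)
     = Poly_Mapping.lookup f (b, a) * ((-1) ^ (a * b) * c ^ (a + b) :: 'k::field)"
proof -
  have "mat_act skew_mult (0, c, c, 0) f = (\<Sum>x\<in>Poly_Mapping.keys f.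
      Poly_Mapping.single ((\<lambda>(i, j). (j, i)) x)
        (Poly_Mapping.lookup f x * ((-1) ^ (fst x * snd x) * c ^ (fst x + snd x))))"
    unfolding mat_act_def Let_def bscal_zero var_u_def var_v_def
    by (simp add: split_def bscal_single mpower_skew_mult_u[simplified] mpower_skew_mult_v[simplified]
        skew_mult_single power_add mult.assoc)
  then show ?thesis
    using lookup_sum_keys_single_inj[OF swap_inj_on, of f
        "\<lambda>x. (-1) ^ (fst x * snd x) * c ^ (fst x + snd x)" "(b, a)"]
    by (simp add: mult.commute add.commute)
qed

lemma mat2_pow_antidiagonal:
  "mat2_pow (0, x, x, 0) n = (if even n then (x ^ n, 0, 0, x ^ n) else (0, x ^ n, x ^ n, 0) :: 'k::field mat2)"
  unfolding mat2_pow_def by (induction n) (auto simp: mat2_mult_def)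

lemma mat2_pow_diagonal: "mat2_pow (x, 0, 0, y) n = ((x ^ n, 0, 0, y ^ n) :: 'k::field mat2)"
  unfolding mat2_pow_def by (induction n) (auto simp: mat2_mult_def)

lemma mat_act_skew_antidiagonal_pow_Suc:
  "mat_act skew_mult (mat2_pow (0, c, c, 0) (Suc n)) f
     = mat_act skew_mult (0, c, c, 0) (mat_act skew_mult (mat2_pow (0, c, c, 0) n) (f :: 'k::field bipoly))"
proof (rule poly_mapping_eqI)
  fix y :: "nat \<times> nat"
  obtain a b where y: "y = (a, b)" by fastforce
  have sign: "(-1::'k) ^ (a * b) * (-1) ^ (b * a) = 1"
    by (simp add: power_add[symmetric] mult.commute)
  show "Poly_Mapping.lookup (mat_act skew_mult (mat2_pow (0, c, c, 0) (Suc n)) f) y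
      = Poly_Mapping.lookup (mat_act skew_mult (0, c, c, 0) (mat_act skew_mult (mat2_pow (0, c, c, 0) n) f)) y"
    unfolding y mat2_pow_antidiagonal
    using sign
    by (auto simp: lookup_mat_act_skew_antidiagonal lookup_mat_act_skew_diagonal
        power_mult[symmetric] power_add[symmetric] algebra_simps)
qed

definition swap_symmetric :: "(nat \<times> nat \<Rightarrow> 'k::field) \<Rightarrow> 'k bipoly \<Rightarrow> bool" where
  "swap_symmetric c f \<longleftrightarrow> (\<forall>a b. Poly_Mapping.lookup f (a, b) = Poly_Mapping.lookup f (b, a) * c (a, b))"

lemma fixed_iff_swap_symmetric:
  assumes "\<And>a b. Poly_Mapping.lookup (T f) (a, b) = Poly_Mapping.lookup f (b, a) * c (a, b)"
  shows "T f = f \<longleftrightarrow> swap_symmetric c f"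
proof
  assume "T f = f"
  then show "swap_symmetric c f"
    unfolding swap_symmetric_def using assms by metis
next
  assume sym: "swap_symmetric c f"
  show "T f = f"
  proof (rule poly_mapping_eqI)
    fix y :: "nat \<times> nat"
    obtain a b where y: "y = (a, b)"
      by fastforce
    have "Poly_Mapping.lookup f (a, b) = Poly_Mapping.lookup f (b, a) * c (a, b)"
      using sym unfolding swap_symmetric_def by blast
    then show "Poly_Mapping.lookup (T f) y = Poly_Mapping.lookup f y"
      by (simp only: y assms)
  qed
qed

lemma skew_antidiagonal_pow_fixed_iff:
  "(\<forall>n. mat_act skew_mult (mat2_pow (0, c, c, 0) n) f = f)
     \<longleftrightarrow> mat_act skew_mult (0, c, c, 0) (f :: 'k::field bipoly) = f"
proof
  assume "\<forall>n. mat_act skew_mult (mat2_pow (0, c, c, 0) n) f = f"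
  then show "mat_act skew_mult (0, c, c, 0) f = f"
    by (metis One_nat_def mat2_pow_antidiagonal odd_one power_one_right)
next
  assume fixed: "mat_act skew_mult (0, c, c, 0) f = f"
  show "\<forall>n. mat_act skew_mult (mat2_pow (0, c, c, 0) n) f = f"
  proof
    fix n
    show "mat_act skew_mult (mat2_pow (0, c, c, 0) n) f = f"
    proof (induction n)
      case 0
      show ?case
        by (rule poly_mapping_eqI) (simp add: mat2_pow_def lookup_mat_act_skew_diagonal)
    next
      case (Suc n)
      then show ?case
        using fixed by (simp only: mat_act_skew_antidiagonal_pow_Suc)
    qed
  qed
qed

lemma cyc_invariants_skew_G1:
  "cyc_invariants skew_mult (G1_gen \<xi>) = {f. swap_symmetric (\<lambda>(a, b). (-1) ^ (a * b) * \<xi> ^ (a + b)) f}"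
proof -
  have "mat_act skew_mult (0, \<xi>, \<xi>, 0) f = f
      \<longleftrightarrow> swap_symmetric (\<lambda>(a, b). (-1) ^ (a * b) * \<xi> ^ (a + b)) f" for f
    by (rule fixed_iff_swap_symmetric) (simp add: lookup_mat_act_skew_antidiagonal)
  then show ?thesis
    by (auto simp: cyc_invariants_def G1_gen_def skew_antidiagonal_pow_fixed_iff)
qed

lemma bsubst_antidiagonal_fixed_iff:
  "bsubst (bconst \<xi> * var_v) (bconst \<xi> * var_u) F = F \<longleftrightarrow> swap_symmetric (\<lambda>(a, b). \<xi> ^ (a + b)) F"
  by (rule fixed_iff_swap_symmetric) (subst lookup_bsubst_antidiagonal, simp add: power_add mult.commute)

lemma bsubst_diagonal_fixed_iff:
  "bsubst (bconst \<alpha> * var_u) (bconst \<beta> * var_v) F = F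
     \<longleftrightarrow> (\<forall>y\<in>Poly_Mapping.keys F. \<alpha> ^ fst y * \<beta> ^ snd y = (1::'k::field))"
proof -
  have "Poly_Mapping.lookup F y * (\<alpha> ^ fst y * \<beta> ^ snd y) = Poly_Mapping.lookup F y
      \<longleftrightarrow> (y \<in> Poly_Mapping.keys F \<longrightarrow> \<alpha> ^ fst y * \<beta> ^ snd y = 1)" for y
    by (auto simp: in_keys_iff)
  then show ?thesis
    by (simp only: poly_mapping_eq_iff fun_eq_iff lookup_bsubst_diagonal Ball_def)
qed

section \<open>Roots of unity and the diagonal invariants\<close>

lemma primitive_root_pow_eq_1_iff:
  assumes "primitive_root w m" "m > 0"
  shows "w ^ n = 1 \<longleftrightarrow> m dvd n"
proof
  assume "w ^ n = 1"
  moreover have "w ^ n = (w ^ m) ^ (n div m) * w ^ (n mod m)"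
    by (simp flip: power_mult power_add)
  ultimately have "w ^ (n mod m) = 1"
    using assms(1) by (simp add: primitive_root_def)
  moreover have "n mod m < m"
    using assms(2) by simp
  ultimately show "m dvd n"
    using assms(1) unfolding primitive_root_def by (metis dvd_eq_mod_eq_0 neq0_conv)
next
  assume "m dvd n"
  with assms(1) show "w ^ n = 1"
    by (auto simp: primitive_root_def power_mult)
qed

lemma primitive_root_pow_half:
  assumes "primitive_root \<xi> (2 * k)" "k > 0"
  shows "\<xi> ^ k = (-1::'k::field)"
proof -
  have "(\<xi> ^ k) ^ 2 = 1"
    using assms(1) by (simp add: primitive_root_def power_mult[symmetric] mult.commute)
  moreover have "\<xi> ^ k \<noteq> 1"
    using assms unfolding primitive_root_def by simp
  ultimately show ?thesis
    by (simp add: power2_eq_1_iff)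
qed

lemma primitive_root_square_four_dvd:
  assumes "primitive_root \<xi> (2 * k)" "k > 0" "4 dvd k" "(\<xi> ^ d) ^ 2 = (1::'k::field)"
  shows "4 dvd d"
proof -
  have "\<xi> ^ (2 * d) = 1"
    using assms(4) by (simp add: power_mult[symmetric] mult.commute)
  then have "k dvd d"
    using primitive_root_pow_eq_1_iff[OF assms(1)] assms(2) by simp
  with assms(3) show ?thesis
    by (rule dvd_trans)
qed

definition diag_invariant_polys :: "nat \<Rightarrow> 'k::field bipoly set" where
  "diag_invariant_polys k = {F. \<forall>y\<in>Poly_Mapping.keys F. 2 * k dvd fst y + (k + 1) * snd y}"

lemma bsubst_root_diagonal_fixed_iff:
  assumes "primitive_root w (2 * k)" "k > 0"
  shows "bsubst (bconst w * var_u) (bconst (w ^ (k + 1)) * var_v) F = F \<longleftrightarrow> F \<in> diag_invariant_polys k"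
proof -
  have "w ^ a * (w ^ (k + 1)) ^ b = w ^ (a + (k + 1) * b)" for a b
    by (simp add: power_add power_mult power_mult_distrib)
  then show ?thesis
    unfolding bsubst_diagonal_fixed_iff diag_invariant_polys_def
    using primitive_root_pow_eq_1_iff[OF assms(1)] assms(2) by simp
qed

lemma cyc_invariants_comm_diag:
  assumes "primitive_root \<omega> (2 * k)" "k > 0"
  shows "cyc_invariants comm_mult (cyc_diag_gen (\<omega>::'k::field) (k + 1)) = diag_invariant_polys k"
proof -
  have act: "mat_act comm_mult (mat2_pow (cyc_diag_gen \<omega> (k + 1)) n) F
      = bsubst (bconst (\<omega> ^ n) * var_u) (bconst ((\<omega> ^ (k + 1)) ^ n) * var_v) F" for n F
    by (simp add: cyc_diag_gen_def mat2_pow_diagonal mat_act_comm_mult)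
  have weight: "(\<omega> ^ n) ^ fst y * ((\<omega> ^ (k + 1)) ^ n) ^ snd y = (\<omega> ^ (fst y + (k + 1) * snd y)) ^ n" for n y
    by (simp add: power_add power_mult[symmetric] power_mult_distrib algebra_simps)
  have invariant_iff: "F \<in> diag_invariant_polys k
      \<longleftrightarrow> (\<forall>y\<in>Poly_Mapping.keys F. \<omega> ^ (fst y + (k + 1) * snd y) = 1)" for F
    unfolding diag_invariant_polys_def using primitive_root_pow_eq_1_iff[OF assms(1)] assms(2) by simp
  have powers_iff: "(\<forall>n. \<forall>y\<in>Poly_Mapping.keys F. (\<omega> ^ (fst y + (k + 1) * snd y)) ^ n = 1)
      \<longleftrightarrow> (\<forall>y\<in>Poly_Mapping.keys F. \<omega> ^ (fst y + (k + 1) * snd y) = 1)" for F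
  proof
    assume "\<forall>n. \<forall>y\<in>Poly_Mapping.keys F. (\<omega> ^ (fst y + (k + 1) * snd y)) ^ n = 1"
    then have "\<forall>y\<in>Poly_Mapping.keys F. (\<omega> ^ (fst y + (k + 1) * snd y)) ^ 1 = 1"
      by (rule spec)
    then show "\<forall>y\<in>Poly_Mapping.keys F. \<omega> ^ (fst y + (k + 1) * snd y) = 1"
      by simp
  qed simp
  have "F \<in> cyc_invariants comm_mult (cyc_diag_gen \<omega> (k + 1)) \<longleftrightarrow> F \<in> diag_invariant_polys k" for F
    unfolding cyc_invariants_def mem_Collect_eq act bsubst_diagonal_fixed_iff weight powers_iff invariant_iff ..
  then show ?thesis
    by (rule set_eqI)
qed

section \<open>The sign twist\<close>

definition twist_sign :: "nat \<Rightarrow> 'k::field" where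
  "twist_sign b = (-1) ^ (\<Sum>i<b. i)"

lemma twist_sign_add: "twist_sign (a + b) = twist_sign a * twist_sign b * (-1) ^ (a * b)"
  by (induction b) (simp_all add: twist_sign_def power_add algebra_simps)

lemma twist_sign_square: "twist_sign b * twist_sign b = (1::'k::field)"
  unfolding twist_sign_def power_mult_distrib[symmetric] by simp

lemma twist_sign_nonzero: "twist_sign b \<noteq> (0::'k::field)"
  by (simp add: twist_sign_def)

lemma twist_sign_four_mult: "twist_sign (4 * e) = (1::'k::field)"
proof (induction e)
  case 0
  show ?case by (simp add: twist_sign_def)
next
  case (Suc e)
  have "twist_sign (4::nat) = (1::'k)"
    by (simp add: twist_sign_def lessThan_Suc numeral_eq_Suc)
  moreover have "(-1::'k) ^ (4 * e * 4) = 1"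
    by (simp add: neg_one_even_power)
  moreover have "4 * Suc e = 4 * e + 4"
    by simp
  ultimately show ?case
    by (simp only: twist_sign_add Suc.IH mult_1_left mult_1_right)
qed

lemma twist_sign_swap:
  assumes "4 dvd a + b"
  shows "twist_sign b * (-1) ^ (a * b) = (twist_sign a :: 'k::field)"
proof -
  obtain e where e: "a + b = 4 * e"
    using assms by blast
  have "twist_sign a * (twist_sign b * (-1) ^ (a * b)) = (twist_sign (a + b) :: 'k)"
    by (simp only: twist_sign_add mult.assoc)
  also have "\<dots> = 1"
    by (simp only: e twist_sign_four_mult)
  finally have one: "twist_sign a * (twist_sign b * (-1) ^ (a * b)) = (1::'k)" .
  have "twist_sign b * (-1) ^ (a * b) = twist_sign a * (twist_sign a * (twist_sign b * (-1) ^ (a * b)) :: 'k)"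
    by (simp add: mult.assoc[symmetric] twist_sign_square)
  also have "\<dots> = twist_sign a"
    by (simp add: one)
  finally show ?thesis .
qed

definition twist :: "'k::field bipoly \<Rightarrow> 'k bipoly" where
  "twist f = Poly_Mapping.mapp (\<lambda>y c. c * twist_sign (snd y)) f"

lemma lookup_twist: "Poly_Mapping.lookup (twist f) y = Poly_Mapping.lookup f y * twist_sign (snd y)"
  by (simp add: twist_def lookup_mapp when_def in_keys_iff)

lemma keys_twist: "Poly_Mapping.keys (twist f) = Poly_Mapping.keys f"
  by (auto simp: in_keys_iff lookup_twist twist_sign_nonzero)

lemma twist_twist: "twist (twist f) = f"
  by (rule poly_mapping_eqI) (simp add: lookup_twist mult.assoc twist_sign_square)

lemma twist_add: "twist (f + g) = twist f + twist g"
  by (rule poly_mapping_eqI) (simp add: lookup_twist lookup_add algebra_simps)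

lemma twist_bconst_mult: "twist (bconst c * f) = bconst c * twist f"
  by (rule poly_mapping_eqI) (simp add: lookup_twist lookup_bconst_mult mult.assoc)

lemma twist_one: "twist 1 = (1 :: 'k::field bipoly)"
  by (rule poly_mapping_eqI) (simp add: lookup_twist lookup_one when_def twist_sign_def)

lemma twist_sum: "twist (\<Sum>i\<in>I. F i) = (\<Sum>i\<in>I. twist (F i))"
  by (rule poly_mapping_eqI) (simp add: lookup_twist lookup_sum sum_distrib_right)

lemma twist_single: "twist (Poly_Mapping.single y c) = Poly_Mapping.single y (c * twist_sign (snd y))"
  by (rule poly_mapping_eqI) (simp add: lookup_twist lookup_single when_def)

lemma skew_mult_expand:
  "skew_mult f g = (\<Sum>p\<in>Poly_Mapping.keys f. \<Sum>q\<in>Poly_Mapping.keys g.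
     Poly_Mapping.single (p + q)
       ((-1) ^ (snd p * fst q) * Poly_Mapping.lookup f p * Poly_Mapping.lookup g q :: 'k::field))"
  unfolding skew_mult_def by (simp add: split_def plus_prod_def)

text \<open>On monomials, \<open>(-1)\<^bsup>ja\<^esup> twist_sign (j + b) = twist_sign j twist_sign b\<close>
  as soon as \<open>a + b\<close> is even.\<close>
lemma twist_skew_mult:
  fixes f g :: "'k::field bipoly"
  assumes "\<forall>q\<in>Poly_Mapping.keys g. even (fst q + snd q)"
  shows "twist (skew_mult f g) = twist f * twist g"
proof -
  have "twist (skew_mult f g) = (\<Sum>p\<in>Poly_Mapping.keys f. \<Sum>q\<in>Poly_Mapping.keys g.
      Poly_Mapping.single (p + q)
        (Poly_Mapping.lookup f p * twist_sign (snd p) * (Poly_Mapping.lookup g q * twist_sign (snd q))))"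
    unfolding skew_mult_expand twist_sum twist_single
  proof (intro sum.cong refl arg_cong[where f = "Poly_Mapping.single _"])
    fix p q :: "nat \<times> nat"
    assume "q \<in> Poly_Mapping.keys g"
    then have "even (fst q + snd q)"
      using assms by blast
    then have "(-1::'k) ^ (snd p * fst q) * (-1) ^ (snd p * snd q) = 1"
      by (simp add: power_add[symmetric] distrib_left[symmetric])
    then show "(-1) ^ (snd p * fst q) * Poly_Mapping.lookup f p * Poly_Mapping.lookup g q * twist_sign (snd (p + q))
        = Poly_Mapping.lookup f p * twist_sign (snd p) * (Poly_Mapping.lookup g q * twist_sign (snd q))"
      by (simp add: twist_sign_add algebra_simps)
  qed
  also have "\<dots> = twist f * twist g"
    by (simp add: times_bipoly_expand keys_twist lookup_twist)
  finally show ?thesis .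
qed

lemma swap_symmetric_coeff_product:
  assumes "swap_symmetric c f" "Poly_Mapping.lookup f (a, b) \<noteq> 0"
  shows "c (a, b) * c (b, a) = 1"
proof -
  have ab: "Poly_Mapping.lookup f (a, b) = Poly_Mapping.lookup f (b, a) * c (a, b)"
    and ba: "Poly_Mapping.lookup f (b, a) = Poly_Mapping.lookup f (a, b) * c (b, a)"
    using assms(1) unfolding swap_symmetric_def by blast+
  have "Poly_Mapping.lookup f (a, b) * (c (a, b) * c (b, a)) = Poly_Mapping.lookup f (a, b) * 1"
    using ab[unfolded ba] by (simp add: mult_ac)
  then show ?thesis
    by (rule mult_left_cancel[OF assms(2), THEN iffD1])
qed

lemma swap_symmetric_four_dvd_degree:
  assumes "primitive_root \<xi> (2 * k)" "k > 0" "4 dvd k"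
    and "swap_symmetric c f" "\<And>a b. c (a, b) * c (b, a) = (\<xi> ^ (a + b)) ^ 2"
    and "(a, b) \<in> Poly_Mapping.keys f"
  shows "4 dvd a + b"
proof -
  have "c (a, b) * c (b, a) = 1"
    using swap_symmetric_coeff_product[OF assms(4)] assms(6) by (simp add: in_keys_iff)
  then have "(\<xi> ^ (a + b)) ^ 2 = 1"
    using assms(5) by simp
  then show ?thesis
    by (rule primitive_root_square_four_dvd[OF assms(1-3)])
qed

lemma swap_symmetric_twist:
  fixes c :: "nat \<times> nat \<Rightarrow> 'k::field"
  assumes "\<forall>(a, b)\<in>Poly_Mapping.keys f. 4 dvd a + b" "swap_symmetric c f"
  shows "swap_symmetric (\<lambda>(a, b). (-1) ^ (a * b) * c (a, b)) (twist f)"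
  unfolding swap_symmetric_def
proof (intro allI)
  fix a b
  have sym: "Poly_Mapping.lookup f (a, b) = Poly_Mapping.lookup f (b, a) * c (a, b)"
    using assms(2) unfolding swap_symmetric_def by blast
  show "Poly_Mapping.lookup (twist f) (a, b)
      = Poly_Mapping.lookup (twist f) (b, a) * (case (a, b) of (a, b) \<Rightarrow> (-1) ^ (a * b) * c (a, b))"
  proof (cases "(b, a) \<in> Poly_Mapping.keys f")
    case True
    then have "4 dvd b + a"
      using bspec[OF assms(1) True] by simp
    then have sign: "twist_sign a * (-1) ^ (b * a) = (twist_sign b :: 'k)"
      by (rule twist_sign_swap)
    have "Poly_Mapping.lookup (twist f) (a, b) = Poly_Mapping.lookup f (b, a) * c (a, b) * twist_sign b"
      by (simp only: lookup_twist sym snd_conv)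
    also have "\<dots> = Poly_Mapping.lookup f (b, a) * c (a, b) * (twist_sign a * (-1) ^ (b * a))"
      by (simp only: sign)
    also have "\<dots> = Poly_Mapping.lookup (twist f) (b, a) * ((-1) ^ (a * b) * c (a, b))"
      by (simp add: lookup_twist mult_ac)
    finally show ?thesis
      by simp
  next
    case False
    then have "Poly_Mapping.lookup f (b, a) = 0"
      by (simp add: in_keys_iff)
    moreover from this have "Poly_Mapping.lookup f (a, b) = 0"
      by (simp only: sym mult_zero_left)
    ultimately show ?thesis
      by (simp add: lookup_twist)
  qed
qed

section \<open>The change of variables \<open>u \<mapsto> u + v, v \<mapsto> u - v\<close>\<close>

definition hadamard :: "'k::field bipoly \<Rightarrow> 'k bipoly" where
  "hadamard = bsubst (var_u + var_v) (var_u - var_v)"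

definition hadamard_inv :: "'k::field_char_0 bipoly \<Rightarrow> 'k bipoly" where
  "hadamard_inv = bsubst (bconst (1 / 2) * (var_u + var_v)) (bconst (1 / 2) * (var_u - var_v))"

lemma half_add_half: "bconst (1 / 2) * p + bconst (1 / 2) * p = (p :: 'k::field_char_0 bipoly)"
proof -
  have "bconst (1 / 2) + bconst (1 / 2) = (1 :: 'k bipoly)"
    by (simp flip: single_add)
  then show ?thesis
    by (metis distrib_right mult_1_left)
qed

lemma half_sum_add_diff: "bconst (1 / 2) * ((p + q) + (p - q)) = (p :: 'k::field_char_0 bipoly)"
proof -
  have "bconst (1 / 2) * ((p + q) + (p - q)) = bconst (1 / 2) * p + bconst (1 / 2) * (p :: 'k bipoly)"
    by (simp add: algebra_simps)
  then show ?thesis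
    by (simp only: half_add_half)
qed

lemma half_sum_diff_diff: "bconst (1 / 2) * ((p + q) - (p - q)) = (q :: 'k::field_char_0 bipoly)"
proof -
  have "bconst (1 / 2) * ((p + q) - (p - q)) = bconst (1 / 2) * q + bconst (1 / 2) * (q :: 'k bipoly)"
    by (simp add: algebra_simps)
  then show ?thesis
    by (simp only: half_add_half)
qed

lemma hadamard_inv_hadamard: "hadamard_inv (hadamard F) = (F :: 'k::field_char_0 bipoly)"
proof -
  have "bsubst (bconst (1 / 2) * (var_u + var_v)) (bconst (1 / 2) * (var_u - var_v)) (var_u + var_v)
      = (var_u :: 'k bipoly)"
    unfolding bsubst_add bsubst_var_u bsubst_var_v distrib_left[symmetric] by (rule half_sum_add_diff)
  moreover have "bsubst (bconst (1 / 2) * (var_u + var_v)) (bconst (1 / 2) * (var_u - var_v)) (var_u - var_v)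
      = (var_v :: 'k bipoly)"
    unfolding bsubst_diff bsubst_var_u bsubst_var_v right_diff_distrib[symmetric] by (rule half_sum_diff_diff)
  ultimately show ?thesis
    unfolding hadamard_def hadamard_inv_def by (rule bsubst_inverse)
qed

lemma hadamard_hadamard_inv: "hadamard (hadamard_inv F) = (F :: 'k::field_char_0 bipoly)"
proof -
  have "bsubst (var_u + var_v) (var_u - var_v) (bconst (1 / 2) * (var_u + var_v)) = (var_u :: 'k bipoly)"
    unfolding bsubst_bconst_mult bsubst_add bsubst_var_u bsubst_var_v by (rule half_sum_add_diff)
  moreover have "bsubst (var_u + var_v) (var_u - var_v) (bconst (1 / 2) * (var_u - var_v)) = (var_v :: 'k bipoly)"
    unfolding bsubst_bconst_mult bsubst_diff bsubst_var_u bsubst_var_v by (rule half_sum_diff_diff)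
  ultimately show ?thesis
    unfolding hadamard_def hadamard_inv_def by (rule bsubst_inverse)
qed

lemma hadamard_conj_swap:
  "bsubst (bconst \<xi> * var_v) (bconst \<xi> * var_u) (hadamard F)
     = hadamard (bsubst (bconst \<xi> * var_u) (bconst (- \<xi>) * var_v) F)"
proof -
  have "bsubst (bconst \<xi> * var_v) (bconst \<xi> * var_u) (var_u + var_v)
      = bsubst (var_u + var_v) (var_u - var_v) (bconst \<xi> * var_u)"
    by (simp only: bsubst_add bsubst_bconst_mult bsubst_var_u bsubst_var_v) (simp add: algebra_simps)
  moreover have "bsubst (bconst \<xi> * var_v) (bconst \<xi> * var_u) (var_u - var_v)
      = bsubst (var_u + var_v) (var_u - var_v) (bconst (- \<xi>) * var_v)"
    by (simp only: bsubst_diff bsubst_bconst_mult bsubst_var_u bsubst_var_v)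
      (simp add: single_uminus algebra_simps)
  ultimately show ?thesis
    unfolding hadamard_def by (simp only: bsubst_bsubst)
qed

lemma swap_fixed_iff_hadamard_inv_diag_fixed:
  fixes G :: "'k::field_char_0 bipoly"
  shows "bsubst (bconst \<xi> * var_v) (bconst \<xi> * var_u) G = G
     \<longleftrightarrow> bsubst (bconst \<xi> * var_u) (bconst (- \<xi>) * var_v) (hadamard_inv G) = hadamard_inv G"
    (is "?swap G = G \<longleftrightarrow> ?diag (hadamard_inv G) = hadamard_inv G")
proof
  assume "?swap G = G"
  then have "hadamard (?diag (hadamard_inv G)) = hadamard (hadamard_inv G)"
    by (simp only: hadamard_conj_swap[symmetric] hadamard_hadamard_inv)
  then show "?diag (hadamard_inv G) = hadamard_inv G"
    by (metis hadamard_inv_hadamard)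
next
  assume "?diag (hadamard_inv G) = hadamard_inv G"
  then show "?swap G = G"
    by (metis hadamard_conj_swap hadamard_hadamard_inv)
qed

lemma swap_symmetric_skew_four_dvd:
  assumes "primitive_root \<xi> (2 * k)" "k > 0" "4 dvd k"
    and "swap_symmetric (\<lambda>(a, b). (-1) ^ (a * b) * \<xi> ^ (a + b)) f"
  shows "\<forall>(a, b)\<in>Poly_Mapping.keys f. 4 dvd a + b"
proof (intro ballI, clarify)
  fix a b
  assume "(a, b) \<in> Poly_Mapping.keys f"
  moreover have "(-1) ^ (a * b) * \<xi> ^ (a + b) * ((-1) ^ (b * a) * \<xi> ^ (b + a)) = (\<xi> ^ (a + b)) ^ 2" for a b
    by (simp add: power2_eq_square mult_ac power_mult_distrib[symmetric] add.commute)
  ultimately show "4 dvd a + b"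
    by (intro swap_symmetric_four_dvd_degree[OF assms]) simp_all
qed

lemma swap_symmetric_comm_four_dvd:
  assumes "primitive_root \<xi> (2 * k)" "k > 0" "4 dvd k"
    and "swap_symmetric (\<lambda>(a, b). \<xi> ^ (a + b)) F"
  shows "\<forall>(a, b)\<in>Poly_Mapping.keys F. 4 dvd a + b"
proof (intro ballI, clarify)
  fix a b
  assume "(a, b) \<in> Poly_Mapping.keys F"
  then show "4 dvd a + b"
    by (intro swap_symmetric_four_dvd_degree[OF assms]) (simp_all add: power2_eq_square add.commute)
qed

lemma twist_skew_to_comm:
  assumes "primitive_root \<xi> (2 * k)" "k > 0" "4 dvd k"
    and "swap_symmetric (\<lambda>(a, b). (-1) ^ (a * b) * \<xi> ^ (a + b)) f"
  shows "swap_symmetric (\<lambda>(a, b). \<xi> ^ (a + b)) (twist f)"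
proof -
  have "(\<lambda>(a, b). (-1) ^ (a * b) * (case (a, b) of (a, b) \<Rightarrow> (-1) ^ (a * b) * \<xi> ^ (a + b)))
      = (\<lambda>(a, b). \<xi> ^ (a + b))"
    by (simp add: fun_eq_iff mult.assoc[symmetric] power_mult_distrib[symmetric])
  then show ?thesis
    using swap_symmetric_twist[OF swap_symmetric_skew_four_dvd[OF assms] assms(4)] by simp
qed

lemma twist_comm_to_skew:
  assumes "primitive_root \<xi> (2 * k)" "k > 0" "4 dvd k"
    and "swap_symmetric (\<lambda>(a, b). \<xi> ^ (a + b)) F"
  shows "swap_symmetric (\<lambda>(a, b). (-1) ^ (a * b) * \<xi> ^ (a + b)) (twist F)"
  using swap_symmetric_twist[OF swap_symmetric_comm_four_dvd[OF assms] assms(4)] by simp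

lemma swap_symmetric_iff_hadamard_inv_invariant:
  fixes \<xi> :: "'k::field_char_0"
  assumes "primitive_root \<xi> (2 * k)" "k > 0"
  shows "swap_symmetric (\<lambda>(a, b). \<xi> ^ (a + b)) G \<longleftrightarrow> hadamard_inv G \<in> diag_invariant_polys k"
proof -
  have "\<xi> ^ (k + 1) = - \<xi>"
    using primitive_root_pow_half[OF assms] by simp
  then show ?thesis
    using bsubst_root_diagonal_fixed_iff[OF assms, of "hadamard_inv G"]
    by (simp add: bsubst_antidiagonal_fixed_iff[symmetric] swap_fixed_iff_hadamard_inv_diag_fixed)
qed

lemma skew_invariants_iso:
  fixes \<xi> :: "'k::field_char_0"
  assumes "primitive_root \<xi> (2 * k)" "k > 0" "4 dvd k"
  shows "subalg_iso skew_mult {f. swap_symmetric (\<lambda>(a, b). (-1) ^ (a * b) * \<xi> ^ (a + b)) f}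
           comm_mult (diag_invariant_polys k)"
proof -
  let ?S = "{f. swap_symmetric (\<lambda>(a, b). (-1) ^ (a * b) * \<xi> ^ (a + b)) f}"
  let ?\<phi> = "\<lambda>f. hadamard_inv (twist f)"
  have "bij_betw ?\<phi> ?S (diag_invariant_polys k)"
  proof (rule bij_betw_byWitness[where f' = "\<lambda>F. twist (hadamard F)"])
    show "\<forall>f\<in>?S. twist (hadamard (?\<phi> f)) = f"
      by (simp add: hadamard_hadamard_inv twist_twist)
    show "\<forall>F\<in>diag_invariant_polys k. ?\<phi> (twist (hadamard F)) = F"
      by (simp add: hadamard_inv_hadamard twist_twist)
    show "?\<phi> ` ?S \<subseteq> diag_invariant_polys k"
      using twist_skew_to_comm[OF assms] swap_symmetric_iff_hadamard_inv_invariant[OF assms(1,2)] by blast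
    show "(\<lambda>F. twist (hadamard F)) ` diag_invariant_polys k \<subseteq> ?S"
      using twist_comm_to_skew[OF assms] swap_symmetric_iff_hadamard_inv_invariant[OF assms(1,2)]
      by (auto simp: hadamard_inv_hadamard)
  qed
  moreover have "?\<phi> (skew_mult f g) = comm_mult (?\<phi> f) (?\<phi> g)" if "g \<in> ?S" for f g
  proof -
    have "\<forall>q\<in>Poly_Mapping.keys g. even (fst q + snd q)"
      using swap_symmetric_skew_four_dvd[OF assms] that by fastforce
    then show ?thesis
      by (simp add: twist_skew_mult comm_mult_eq_times hadamard_inv_def bsubst_mult)
  qed
  ultimately show ?thesis
    unfolding subalg_iso_def
    by (intro exI[of _ ?\<phi>])
      (simp add: bone_eq_one bscal_eq_mult twist_one twist_add twist_bconst_mult hadamard_inv_def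
        bsubst_one bsubst_add bsubst_bconst_mult)
qed

lemma skew_invariants_commute:
  assumes "primitive_root \<xi> (2 * k)" "k > 0" "4 dvd k"
    and "swap_symmetric (\<lambda>(a, b). (-1) ^ (a * b) * \<xi> ^ (a + b)) f"
    and "swap_symmetric (\<lambda>(a, b). (-1) ^ (a * b) * \<xi> ^ (a + b)) g"
  shows "skew_mult f g = skew_mult g f"
proof -
  have even_support: "\<forall>q\<in>Poly_Mapping.keys h. even (fst q + snd q)"
    if "swap_symmetric (\<lambda>(a, b). (-1) ^ (a * b) * \<xi> ^ (a + b)) h" for h
    using swap_symmetric_skew_four_dvd[OF assms(1-3) that] by fastforce
  have "skew_mult f g = twist (twist f * twist g)"
    by (simp add: twist_skew_mult[OF even_support[OF assms(5)], symmetric] twist_twist)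
  also have "\<dots> = twist (twist g * twist f)"
    by (simp add: mult.commute)
  also have "\<dots> = skew_mult g f"
    by (simp add: twist_skew_mult[OF even_support[OF assms(4)], symmetric] twist_twist)
  finally show ?thesis .
qed

theorem mainTheorem15:
  fixes k :: nat and \<xi> \<omega> :: "'k::field_char_0"
  assumes "algebraically_closed TYPE('k)"
    and "k > 0" and "k mod 4 = 0"
    and "primitive_root \<xi> (2 * k)"
    and "primitive_root \<omega> (2 * k)"
  shows "subalg_iso skew_mult (cyc_invariants skew_mult (G1_gen \<xi>))
                    comm_mult (cyc_invariants comm_mult (cyc_diag_gen \<omega> (k + 1)))
       \<and> (\<forall>x\<in>cyc_invariants skew_mult (G1_gen \<xi>). \<forall>y\<in>cyc_invariants skew_mult (G1_gen \<xi>).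
             skew_mult x y = skew_mult y x)"
proof -
  have "4 dvd k"
    using assms(3) by presburger
  then show ?thesis
    unfolding cyc_invariants_skew_G1 cyc_invariants_comm_diag[OF assms(5,2)]
    using skew_invariants_iso[OF assms(4,2)] skew_invariants_commute[OF assms(4,2)] by blast
qed

end
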